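(* Let $f:\{0,1\}^N\to\{0,1\}$ be a Boolean function and let $\tilde f:\{0,1\}^N\to\mathbb R$ be a real multilinear polynomial in $x_0,\dots,x_{N-1}$ that approximates $f$ with error probability $\epsilon$, i.e. $|f(x)-\tilde f(x)|\le\epsilon$ for all $x\in\{0,1\}^N$. Then $$\deg(\tilde f)\;\ge\;\frac14\Big(1-\frac{3\epsilon}{1+\epsilon}\Big)^2\rho_f\,N .$$
   Context: For $x\in\{0,1\}^N$, $e_i$ is the string with a single $1$ in position $i$ and $+$ is bitwise XOR. The influence of variable $i$ is $\mathrm{Inf}_i(f)=\Pr_x[f(x)\ne f(x+e_i)]$ with $x$ uniform in $\{0,1\}^N$, and the average influence is $\rho_f=\frac1N\sum_{i=0}^{N-1}\mathrm{Inf}_i(f)$. *)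

theory Defs
  imports Complex_Main
begin

text \<open>A point x of the cube {0,1}^N is encoded by the set of coordinates i < N with x_i = 1,
  i.e. the cube is Pow {0..<N}. Flipping coordinate i (x + e_i) is symmetric difference with {i}.\<close>

definition cube :: "nat \<Rightarrow> nat set set" where
  "cube N = Pow {0..<N}"

definition flip :: "nat set \<Rightarrow> nat \<Rightarrow> nat set" where
  "flip x i = (if i \<in> x then x - {i} else insert i x)"

definition influence :: "nat \<Rightarrow> (nat set \<Rightarrow> bool) \<Rightarrow> nat \<Rightarrow> real" where
  "influence N f i = real (card {x \<in> cube N. f x \<noteq> f (flip x i)}) / 2 ^ N"

definition avg_influence :: "nat \<Rightarrow> (nat set \<Rightarrow> bool) \<Rightarrow> real" where
  "avg_influence N f = (1 / real N) * (\<Sum>i<N. influence N f i)"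

text \<open>A real multilinear polynomial in x_0..x_{N-1} is given by its coefficient function
  c on subsets S of {0..<N} (coefficient of the monomial prod_{i in S} x_i).\<close>
definition mlpoly_eval :: "nat \<Rightarrow> (nat set \<Rightarrow> real) \<Rightarrow> nat set \<Rightarrow> real" where
  "mlpoly_eval N c x = (\<Sum>S\<in>cube N. c S * (\<Prod>i\<in>S. (if i \<in> x then 1 else 0)))"

definition mlpoly_degree :: "nat \<Rightarrow> (nat set \<Rightarrow> real) \<Rightarrow> nat" where
  "mlpoly_degree N c = Max ({card S | S. S \<in> cube N \<and> c S \<noteq> 0} \<union> {0})"

end

theory Submission
  imports Defs
begin

(*
  Measure a function g on the cube by its edge energy E(g) = sum_i sum_x (g x - g (x + e_i))^2
  and its squared norm Q(g) = sum_x (g x)^2.  A multilinear polynomial p of degree at most d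
  satisfies E(p) <= 4 d Q(p), by induction on the dimension: along the last coordinate write p
  as a - b on the lower and a + b on the upper half of the cube, where b has degree at most
  d - 1.  Cross terms cancel, so Q(p) = 2 (Q(a) + Q(b)), and the energy is
  2 E(a) + 2 E(b) plus 8 Q(b) from the last coordinate.
  If p approximates f within eps, then |p x - p (x + e_i)| >= 1 - 2 eps on every edge where f
  changes, so E(p) >= (1 - 2 eps)^2 2^N N rho_f, while |p| <= 1 + eps gives
  Q(p) <= 2^N (1 + eps)^2.  Comparing the two bounds yields the theorem, since
  1 - 3 eps / (1 + eps) = (1 - 2 eps) / (1 + eps).
*)

definition edge_energy :: "nat \<Rightarrow> (nat set \<Rightarrow> real) \<Rightarrow> real" where
  "edge_energy n g = (\<Sum>i<n. \<Sum>x\<in>cube n. (g x - g (flip x i))\<^sup>2)"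

definition sq_norm :: "nat \<Rightarrow> (nat set \<Rightarrow> real) \<Rightarrow> real" where
  "sq_norm n g = (\<Sum>x\<in>cube n. (g x)\<^sup>2)"

definition mlpoly_degree_le :: "nat \<Rightarrow> (nat set \<Rightarrow> real) \<Rightarrow> nat \<Rightarrow> bool" where
  "mlpoly_degree_le n c d \<longleftrightarrow> (\<forall>S\<in>cube n. c S \<noteq> 0 \<longrightarrow> card S \<le> d)"

lemma finite_cube [simp]: "finite (cube n)"
  by (simp add: cube_def)

lemma finite_cube_elem: "x \<in> cube n \<Longrightarrow> finite x"
  by (auto simp: cube_def intro: finite_subset)

lemma notin_cube_elem: "x \<in> cube n \<Longrightarrow> n \<notin> x"
  by (auto simp: cube_def)

lemma insert_in_cube_Suc: "x \<in> cube n \<Longrightarrow> insert n x \<in> cube (Suc n)"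
  and cube_subset_cube_Suc: "x \<in> cube n \<Longrightarrow> x \<in> cube (Suc n)"
  by (auto simp: cube_def)

lemma cube_Suc: "cube (Suc n) = cube n \<union> insert n ` cube n"
  by (simp add: cube_def atLeast0_lessThan_Suc Pow_insert)

lemma sum_cube_Suc: "(\<Sum>x\<in>cube (Suc n). h x) = (\<Sum>x\<in>cube n. h x + h (insert n x))"
proof -
  have disjoint: "cube n \<inter> insert n ` cube n = {}"
    using notin_cube_elem by blast
  have inj: "inj_on (insert n) (cube n)"
    by (rule inj_onI) (metis notin_cube_elem insert_Diff_if Diff_insert_absorb)
  have "(\<Sum>x\<in>cube (Suc n). h x) = (\<Sum>x\<in>cube n. h x) + (\<Sum>x\<in>insert n ` cube n. h x)"
    unfolding cube_Suc by (rule sum.union_disjoint) (auto simp: disjoint)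
  also have "(\<Sum>x\<in>insert n ` cube n. h x) = (\<Sum>x\<in>cube n. h (insert n x))"
    using inj by (simp add: sum.reindex)
  finally show ?thesis
    by (simp add: sum.distrib)
qed

lemma flip_in_cube: "x \<in> cube n \<Longrightarrow> i < n \<Longrightarrow> flip x i \<in> cube n"
  by (auto simp: cube_def flip_def)

lemma flip_insert_other: "i \<noteq> n \<Longrightarrow> flip (insert n x) i = insert n (flip x i)"
  by (auto simp: flip_def)

lemma flip_cube_elem_self:
  assumes "x \<in> cube n"
  shows "flip x n = insert n x" and "flip (insert n x) n = x"
  using notin_cube_elem[OF assms] by (auto simp: flip_def)

lemma mlpoly_eval_add:
  "mlpoly_eval n (\<lambda>S. c S + c' S) x = mlpoly_eval n c x + mlpoly_eval n c' x"
  unfolding mlpoly_eval_def by (simp add: sum.distrib algebra_simps)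

lemma mlpoly_eval_scale: "mlpoly_eval n (\<lambda>S. r * c S) x = r * mlpoly_eval n c x"
  unfolding mlpoly_eval_def by (simp add: sum_distrib_left algebra_simps)

lemma mlpoly_eval_zero: "(\<And>S. S \<in> cube n \<Longrightarrow> c S = 0) \<Longrightarrow> mlpoly_eval n c x = 0"
  unfolding mlpoly_eval_def by simp

lemma mlpoly_eval_Suc_lower:
  assumes x: "x \<in> cube n"
  shows "mlpoly_eval (Suc n) c x = mlpoly_eval n c x"
  unfolding mlpoly_eval_def sum_cube_Suc
proof (rule sum.cong)
  fix S assume "S \<in> cube n"
  then show "c S * (\<Prod>i\<in>S. if i \<in> x then 1 else 0) +
      c (insert n S) * (\<Prod>i\<in>insert n S. if i \<in> x then 1 else 0) =
      c S * (\<Prod>i\<in>S. if i \<in> x then 1 else 0 :: real)"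
    using finite_cube_elem notin_cube_elem[OF x] notin_cube_elem by simp
qed simp

lemma mlpoly_eval_Suc_upper:
  assumes x: "x \<in> cube n"
  shows "mlpoly_eval (Suc n) c (insert n x) =
    mlpoly_eval n c x + mlpoly_eval n (\<lambda>S. c (insert n S)) x"
  unfolding mlpoly_eval_add[symmetric] unfolding mlpoly_eval_def sum_cube_Suc
proof (rule sum.cong)
  fix S assume S: "S \<in> cube n"
  have "(\<Prod>i\<in>S. if i \<in> insert n x then 1 else 0) = (\<Prod>i\<in>S. if i \<in> x then 1 else 0 :: real)"
    by (rule prod.cong) (use notin_cube_elem[OF S] in auto)
  then show "c S * (\<Prod>i\<in>S. if i \<in> insert n x then 1 else 0) +
      c (insert n S) * (\<Prod>i\<in>insert n S. if i \<in> insert n x then 1 else 0) =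
      (c S + c (insert n S)) * (\<Prod>i\<in>S. if i \<in> x then 1 else 0 :: real)"
    using finite_cube_elem[OF S] notin_cube_elem[OF S] by (simp add: algebra_simps)
qed simp

lemma mlpoly_degree_le_mlpoly_degree: "mlpoly_degree_le n c (mlpoly_degree n c)"
  unfolding mlpoly_degree_le_def
proof (intro ballI impI)
  fix S assume "S \<in> cube n" "c S \<noteq> 0"
  moreover have "finite ({card S | S. S \<in> cube n \<and> c S \<noteq> 0} \<union> {0})"
    by (rule finite_subset[of _ "card ` cube n \<union> {0}"]) auto
  ultimately show "card S \<le> mlpoly_degree n c"
    unfolding mlpoly_degree_def by (intro Max_ge) auto
qed

lemma mlpoly_degree_le_add:
  "mlpoly_degree_le n c d \<Longrightarrow> mlpoly_degree_le n c' d \<Longrightarrow> mlpoly_degree_le n (\<lambda>S. c S + c' S) d"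
  by (force simp: mlpoly_degree_le_def)

lemma mlpoly_degree_le_scale: "mlpoly_degree_le n c d \<Longrightarrow> mlpoly_degree_le n (\<lambda>S. r * c S) d"
  by (simp add: mlpoly_degree_le_def)

lemma mlpoly_degree_le_mono: "mlpoly_degree_le n c d \<Longrightarrow> d \<le> d' \<Longrightarrow> mlpoly_degree_le n c d'"
  by (force simp: mlpoly_degree_le_def)

lemma mlpoly_degree_le_Suc_lower:
  "mlpoly_degree_le (Suc n) c d \<Longrightarrow> mlpoly_degree_le n c d"
  by (simp add: mlpoly_degree_le_def cube_subset_cube_Suc)

lemma mlpoly_degree_le_Suc_upper:
  assumes "mlpoly_degree_le (Suc n) c d" "S \<in> cube n" "c (insert n S) \<noteq> 0"
  shows "Suc (card S) \<le> d"
  using assms insert_in_cube_Suc finite_cube_elem notin_cube_elem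
  by (force simp: mlpoly_degree_le_def)

lemma sq_norm_nonneg: "0 \<le> sq_norm n g"
  unfolding sq_norm_def by (simp add: sum_nonneg)

lemma sq_norm_Suc:
  assumes "\<And>x. x \<in> cube n \<Longrightarrow> g x = a x - b x"
    and "\<And>x. x \<in> cube n \<Longrightarrow> g (insert n x) = a x + b x"
  shows "sq_norm (Suc n) g = 2 * (sq_norm n a + sq_norm n b)"
  unfolding sq_norm_def sum_cube_Suc
  by (simp add: assms sum.distrib sum_distrib_left power2_eq_square algebra_simps cong: sum.cong)

lemma edge_energy_Suc:
  assumes lower: "\<And>x. x \<in> cube n \<Longrightarrow> g x = a x - b x"
    and upper: "\<And>x. x \<in> cube n \<Longrightarrow> g (insert n x) = a x + b x"
  shows "edge_energy (Suc n) g = 2 * edge_energy n a + 2 * edge_energy n b + 8 * sq_norm n b"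
proof -
  have old_direction: "(\<Sum>x\<in>cube (Suc n). (g x - g (flip x i))\<^sup>2) =
      2 * (\<Sum>x\<in>cube n. (a x - a (flip x i))\<^sup>2) + 2 * (\<Sum>x\<in>cube n. (b x - b (flip x i))\<^sup>2)"
    if i: "i < n" for i
  proof -
    have "(g x - g (flip x i))\<^sup>2 + (g (insert n x) - g (flip (insert n x) i))\<^sup>2 =
        2 * (a x - a (flip x i))\<^sup>2 + 2 * (b x - b (flip x i))\<^sup>2" if x: "x \<in> cube n" for x
      using i flip_in_cube[OF x i]
      by (simp add: flip_insert_other lower upper x power2_eq_square algebra_simps)
    then show ?thesis
      unfolding sum_cube_Suc by (simp add: sum.distrib sum_distrib_left)
  qed
  have new_direction: "(\<Sum>x\<in>cube (Suc n). (g x - g (flip x n))\<^sup>2) = 8 * sq_norm n b"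
  proof -
    have "(g x - g (flip x n))\<^sup>2 + (g (insert n x) - g (flip (insert n x) n))\<^sup>2 = 8 * (b x)\<^sup>2"
      if x: "x \<in> cube n" for x
      by (simp add: flip_cube_elem_self[OF x] lower upper x power2_eq_square algebra_simps)
    then show ?thesis
      unfolding sum_cube_Suc sq_norm_def by (simp add: sum_distrib_left)
  qed
  show ?thesis
    unfolding edge_energy_def
    by (simp add: new_direction old_direction sum.distrib sum_distrib_left)
qed

theorem edge_energy_mlpoly_le:
  assumes "mlpoly_degree_le n c d"
  shows "edge_energy n (mlpoly_eval n c) \<le> 4 * real d * sq_norm n (mlpoly_eval n c)"
  using assms
proof (induction n arbitrary: c d)
  case 0
  then show ?case
    by (simp add: edge_energy_def sq_norm_nonneg)
next
  case (Suc n)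
  define cb where "cb S = (1/2) * c (insert n S)" for S
  define ca where "ca S = c S + cb S" for S
  define a where "a = mlpoly_eval n ca"
  define b where "b = mlpoly_eval n cb"
  define g where "g = mlpoly_eval (Suc n) c"
  have lower: "g x = a x - b x" and upper: "g (insert n x) = a x + b x" if "x \<in> cube n" for x
    using that unfolding g_def a_def b_def ca_def cb_def mlpoly_eval_add mlpoly_eval_scale
    by (simp_all add: mlpoly_eval_Suc_lower mlpoly_eval_Suc_upper)
  have deg_upper: "mlpoly_degree_le n (\<lambda>S. c (insert n S)) (d - 1)"
    using mlpoly_degree_le_Suc_upper[OF Suc.prems] by (force simp: mlpoly_degree_le_def)
  then have deg_b: "mlpoly_degree_le n cb (d - 1)"
    unfolding cb_def by (rule mlpoly_degree_le_scale)
  have deg_a: "mlpoly_degree_le n ca d"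
    unfolding ca_def using mlpoly_degree_le_Suc_lower[OF Suc.prems]
    by (rule mlpoly_degree_le_add) (use deg_b mlpoly_degree_le_mono in auto)
  have b_absorbed: "real (d - 1) * sq_norm n b + sq_norm n b \<le> real d * sq_norm n b"
  proof (cases "d = 0")
    case True
    then have "b x = 0" for x
      unfolding b_def cb_def using mlpoly_degree_le_Suc_upper[OF Suc.prems]
      by (intro mlpoly_eval_zero) auto
    then show ?thesis
      by (simp add: sq_norm_def)
  qed (simp add: of_nat_diff algebra_simps)
  have "edge_energy (Suc n) g = 2 * edge_energy n a + 2 * edge_energy n b + 8 * sq_norm n b"
    using lower upper by (rule edge_energy_Suc)
  also have "\<dots> \<le> 2 * (4 * real d * sq_norm n a) + 2 * (4 * real (d - 1) * sq_norm n b) +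
      8 * sq_norm n b"
    using Suc.IH[OF deg_a] Suc.IH[OF deg_b] unfolding a_def b_def by linarith
  also have "\<dots> \<le> 4 * real d * (2 * (sq_norm n a + sq_norm n b))"
    using b_absorbed by (simp add: algebra_simps)
  also have "\<dots> = 4 * real d * sq_norm (Suc n) g"
    using lower upper by (simp add: sq_norm_Suc)
  finally show ?case
    unfolding g_def .
qed

lemma sq_norm_le:
  assumes "\<And>x. x \<in> cube n \<Longrightarrow> \<bar>g x\<bar> \<le> M"
  shows "sq_norm n g \<le> 2 ^ n * M\<^sup>2"
proof -
  have "sq_norm n g \<le> (\<Sum>x\<in>cube n. M\<^sup>2)"
    unfolding sq_norm_def using assms
    by (intro sum_mono) (metis abs_le_square_iff abs_ge_self order_trans)
  also have "\<dots> = 2 ^ n * M\<^sup>2"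
    by (simp add: cube_def card_Pow)
  finally show ?thesis .
qed

lemma edge_energy_ge_influence:
  assumes "\<epsilon> \<le> 1 / 2"
    and approx: "\<And>x. x \<in> cube n \<Longrightarrow> \<bar>(if f x then 1 else 0) - g x\<bar> \<le> \<epsilon>"
  shows "(1 - 2 * \<epsilon>)\<^sup>2 * 2 ^ n * (\<Sum>i<n. influence n f i) \<le> edge_energy n g"
proof -
  have "(1 - 2 * \<epsilon>)\<^sup>2 * 2 ^ n * influence n f i \<le> (\<Sum>x\<in>cube n. (g x - g (flip x i))\<^sup>2)"
    if i: "i < n" for i
  proof -
    let ?A = "{x \<in> cube n. f x \<noteq> f (flip x i)}"
    have "(1 - 2 * \<epsilon>)\<^sup>2 * 2 ^ n * influence n f i = (\<Sum>x\<in>?A. (1 - 2 * \<epsilon>)\<^sup>2)"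
      by (simp add: influence_def)
    also have "\<dots> \<le> (\<Sum>x\<in>?A. (g x - g (flip x i))\<^sup>2)"
    proof (rule sum_mono)
      fix x assume x: "x \<in> ?A"
      then have "1 - 2 * \<epsilon> \<le> \<bar>g x - g (flip x i)\<bar>"
        using approx[of x] approx[OF flip_in_cube[OF _ i], of x] by (auto split: if_splits)
      then show "(1 - 2 * \<epsilon>)\<^sup>2 \<le> (g x - g (flip x i))\<^sup>2"
        using assms(1) by (simp flip: abs_le_square_iff)
    qed
    also have "\<dots> \<le> (\<Sum>x\<in>cube n. (g x - g (flip x i))\<^sup>2)"
      by (rule sum_mono2) auto
    finally show ?thesis .
  qed
  then show ?thesis
    unfolding edge_energy_def sum_distrib_left by (intro sum_mono) auto
qed

lemma avg_influence_times_N: "avg_influence N f * real N = (\<Sum>i<N. influence N f i)"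
  by (cases "N = 0") (simp_all add: avg_influence_def)

theorem theorem6:
  fixes N :: nat and f :: "nat set \<Rightarrow> bool" and c :: "nat set \<Rightarrow> real" and \<epsilon> :: real
  assumes "0 \<le> \<epsilon>" and "\<epsilon> < 1 / 2"
    and approx: "\<forall>x\<in>cube N. \<bar>(if f x then 1 else 0) - mlpoly_eval N c x\<bar> \<le> \<epsilon>"
  shows "real (mlpoly_degree N c) \<ge>
           (1 / 4) * (1 - 3 * \<epsilon> / (1 + \<epsilon>)) ^ 2 * avg_influence N f * real N"
proof -
  define d where "d = mlpoly_degree N c"
  define p where "p = mlpoly_eval N c"
  define I where "I = (\<Sum>i<N. influence N f i)"
  have "(1 - 2 * \<epsilon>)\<^sup>2 * 2 ^ N * I \<le> edge_energy N p"
    unfolding p_def I_def using assms by (intro edge_energy_ge_influence) auto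
  also have "\<dots> \<le> 4 * real d * sq_norm N p"
    unfolding p_def d_def by (intro edge_energy_mlpoly_le mlpoly_degree_le_mlpoly_degree)
  also have "\<dots> \<le> 4 * real d * (2 ^ N * (1 + \<epsilon>)\<^sup>2)"
    using approx by (intro mult_left_mono sq_norm_le) (auto simp: p_def split: if_splits)
  finally have "(1 - 2 * \<epsilon>)\<^sup>2 * I \<le> 4 * (1 + \<epsilon>)\<^sup>2 * real d"
    by (simp add: algebra_simps)
  moreover have "1 - 3 * \<epsilon> / (1 + \<epsilon>) = (1 - 2 * \<epsilon>) / (1 + \<epsilon>)"
    using assms(1) by (simp add: field_simps)
  ultimately show ?thesis
    using assms(1) unfolding mult.assoc[of _ "avg_influence N f"] avg_influence_times_N
    by (simp add: d_def I_def power_divide field_simps)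
qed

end
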